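(* Let $\tau$ be a counterclockwise permutation for monotone linear functions $f_1,\dots,f_n$. Then the cyclic sequence $(f^{\tau_0},f^{\tau_1},\dots,f^{\tau_{n-1}})$ of composites of the shifts of $\tau$ is unimodal.
   Context: A linear function is $f(x)=ax+b$; monotone means $a>0$; identical means $f(x)=x$. $\vec f=(b,1-a)^\top$ and $\theta(f)\in[0,2\pi)$ is its polar angle ($\bot$ if $\vec f=0$). For a permutation $\sigma$ of $[n]$, $f^\sigma=f_{\sigma(n)}\circ\cdots\circ f_{\sigma(1)}$; all $f^\sigma$ have the same slope, so they are totally ordered by the pointwise order. $\sigma$ is counterclockwise if, after discarding positions $i$ with $f_{\sigma(i)}$ identical, there is $k$ with $\theta(f_{\sigma(k)})\le\cdots\le\theta(f_{\sigma(n)})\le\theta(f_{\sigma(1)})\le\cdots\le\theta(f_{\sigma(k-1)})$. The $k$-shift ($k=0,\dots,n-1$) is $\tau_k(i)=\tau(i+k)$ for $i\le n-k$ and $\tau_k(i)=\tau(i+k-n)$ otherwise ($\tau_0=\tau$). A cyclic sequence $(x_0,\dots,x_{n-1})$ in a totally ordered set (indices mod $n$) is unimodal if there are $k,\ell$ with $x_k\le x_{k+1}\le\cdots\le x_\ell\ge x_{\ell+1}\ge\cdots\ge x_{k-1}\ge x_k$. *)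

theory Defs
  imports Complex_Main
begin

definition lin_fun :: "real \<times> real \<Rightarrow> real \<Rightarrow> real" where
  "lin_fun p = (\<lambda>x. fst p * x + snd p)"

definition monotone_lin :: "real \<times> real \<Rightarrow> bool" where
  "monotone_lin p \<longleftrightarrow> fst p > 0"

definition identical_lin :: "real \<times> real \<Rightarrow> bool" where
  "identical_lin p \<longleftrightarrow> lin_fun p = id"

definition lin_vec :: "real \<times> real \<Rightarrow> real \<times> real" where
  "lin_vec p = (snd p, 1 - fst p)"

definition polar_angle :: "real \<times> real \<Rightarrow> real option" where
  "polar_angle v = (if v = (0, 0) then None else
     Some (THE t. 0 \<le> t \<and> t < 2 * pi \<and>
             fst v = sqrt ((fst v)\<^sup>2 + (snd v)\<^sup>2) * cos t \<and>
             snd v = sqrt ((fst v)\<^sup>2 + (snd v)\<^sup>2) * sin t))"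

definition theta :: "real \<times> real \<Rightarrow> real option" where
  "theta p = polar_angle (lin_vec p)"

fun comp_upto :: "(nat \<Rightarrow> real \<times> real) \<Rightarrow> (nat \<Rightarrow> nat) \<Rightarrow> nat \<Rightarrow> real \<Rightarrow> real" where
  "comp_upto f \<sigma> 0 = id"
| "comp_upto f \<sigma> (Suc m) = lin_fun (f (\<sigma> (Suc m))) \<circ> comp_upto f \<sigma> m"

definition composite :: "(nat \<Rightarrow> real \<times> real) \<Rightarrow> nat \<Rightarrow> (nat \<Rightarrow> nat) \<Rightarrow> real \<Rightarrow> real" where
  "composite f n \<sigma> = comp_upto f \<sigma> n"

definition counterclockwise :: "(nat \<Rightarrow> real \<times> real) \<Rightarrow> nat \<Rightarrow> (nat \<Rightarrow> nat) \<Rightarrow> bool" where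
  "counterclockwise f n \<sigma> \<longleftrightarrow>
     (let L = [the (theta (f (\<sigma> i))). i \<leftarrow> [1..<n+1], \<not> identical_lin (f (\<sigma> i))]
      in \<exists>k. sorted (rotate k L))"

definition shift :: "nat \<Rightarrow> (nat \<Rightarrow> nat) \<Rightarrow> nat \<Rightarrow> nat \<Rightarrow> nat" where
  "shift n \<tau> k i = (if i \<le> n - k then \<tau> (i + k) else \<tau> (i + k - n))"

definition cyclic_unimodal :: "nat \<Rightarrow> (nat \<Rightarrow> 'a::order) \<Rightarrow> bool" where
  "cyclic_unimodal n x \<longleftrightarrow>
     (\<exists>k<n. \<exists>l<n.
        (\<forall>j < (l + n - k) mod n. x ((k + j) mod n) \<le> x ((k + j + 1) mod n)) \<and>
        (\<forall>j. (l + n - k) mod n \<le> j \<and> j < n \<longrightarrow> x ((k + j) mod n) \<ge> x ((k + j + 1) mod n)))"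

end

theory Submission
  imports Defs
begin

(*
  All composites f^{\<tau>_k} have the same slope A, so they are ordered by their intercepts
  X_k = f^{\<tau>_k}(0). Moving the first factor g(x) = a x + b of \<tau>_k to the end conjugates the
  composite by g, whence X_{k+1} = a X_k + b (1 - A). Thus X_{k+1} - X_k is the cross product of the
  vector (b, 1 - a) of g with the point (X_k, 1 - A), and has the sign of its cross product with
  (X_{k+1}, 1 - A) as well. Between a rise of X and the next fall (or vice versa), the point, taken with
  the sign of the first of these steps, therefore has polar angle strictly between the angles of the
  two vectors responsible. The points (X_k, 1 - A) all lie in one open half plane (unless X vanishes),
  so the sign of sin(\<mu> - \<gamma>) at those angles changes at most twice while the vector angles
  sweep once around the circle, as counterclockwise order guarantees. Hence X cannot rise, fall, rise
  and fall within one period, which is unimodality.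
*)

section \<open>Polar coordinates in the plane\<close>

definition cross2 :: "real \<times> real \<Rightarrow> real \<times> real \<Rightarrow> real" where
  "cross2 u w = fst u * snd w - snd u * fst w"

lemma cross2_polar:
  "cross2 (r1 * cos a, r1 * sin a) (r2 * cos b, r2 * sin b) = r1 * r2 * sin (b - a)"
  unfolding cross2_def by (simp add: sin_diff algebra_simps)

lemma polar_form:
  fixes w :: "real \<times> real"
  defines "r \<equiv> sqrt ((fst w)\<^sup>2 + (snd w)\<^sup>2)"
  assumes "w \<noteq> (0, 0)"
  obtains t where "r > 0" "0 \<le> t" "t < 2 * pi" "w = (r * cos t, r * sin t)"
proof -
  have "(fst w)\<^sup>2 + (snd w)\<^sup>2 > 0"
    using assms(2) by (cases w) (auto simp: sum_power2_gt_zero_iff)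
  hence r_pos: "r > 0" and r_sq: "r\<^sup>2 = (fst w)\<^sup>2 + (snd w)\<^sup>2"
    unfolding r_def by simp_all
  have "(fst w / r)\<^sup>2 + (snd w / r)\<^sup>2 = ((fst w)\<^sup>2 + (snd w)\<^sup>2) / r\<^sup>2"
    by (simp add: power_divide add_divide_distrib)
  hence "(fst w / r)\<^sup>2 + (snd w / r)\<^sup>2 = 1"
    using r_pos by (simp add: r_sq[symmetric])
  then obtain t where "0 \<le> t" "t < 2 * pi" "fst w / r = cos t" "snd w / r = sin t"
    using sincos_total_2pi by metis
  with r_pos show thesis
    using that[of t] by (cases w) (auto simp: field_simps)
qed

lemma polar_angle_SomeE:
  fixes w :: "real \<times> real"
  defines "r \<equiv> sqrt ((fst w)\<^sup>2 + (snd w)\<^sup>2)"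
  assumes "w \<noteq> (0, 0)"
  obtains t where "r > 0" "polar_angle w = Some t" "0 \<le> t" "t < 2 * pi" "w = (r * cos t, r * sin t)"
proof -
  define P where "P t \<longleftrightarrow> 0 \<le> t \<and> t < 2 * pi \<and> fst w = r * cos t \<and> snd w = r * sin t" for t
  obtain t0 where "r > 0" and t0: "0 \<le> t0" "t0 < 2 * pi" "w = (r * cos t0, r * sin t0)"
    using polar_form[OF assms(2)] unfolding r_def by blast
  hence "r \<noteq> 0"
    by simp
  have "t = t0" if "P t" for t
  proof -
    have "sin t = sin t0 \<and> cos t = cos t0"
      using that t0 \<open>r \<noteq> 0\<close> unfolding P_def by auto
    then obtain k :: int where k: "t = t0 + 2 * pi * of_int k"
      using sin_cos_eq_iff by blast
    with that t0 have "pi * of_int k < pi * 1" "pi * (-1) < pi * of_int k"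
      unfolding P_def by linarith+
    hence "of_int k < (1::real)" "(-1::real) < of_int k"
      using mult_less_cancel_left_pos[OF pi_gt_zero] by blast+
    thus ?thesis using k by simp
  qed
  moreover have "P t0"
    using t0 unfolding P_def by auto
  ultimately have "(THE t. P t) = t0"
    by (rule the_equality[rotated])
  hence "polar_angle w = Some t0"
    using assms(2) unfolding polar_angle_def P_def r_def by simp
  with \<open>r > 0\<close> t0 show thesis using that by blast
qed

lemma angle_in_period_offset:
  fixes y :: real
  obtains k :: int where "0 \<le> y + 2 * pi * of_int k" "y + 2 * pi * of_int k < 2 * pi"
proof -
  define k where "k = - \<lfloor>y / (2 * pi)\<rfloor>"
  have "- of_int k \<le> y / (2 * pi)" "y / (2 * pi) < - of_int k + 1"
    unfolding k_def by linarith+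
  hence "- 2 * pi * of_int k \<le> y" "y < 2 * pi * (- of_int k + 1)"
    by (simp_all add: field_simps)
  thus thesis using that[of k] by (simp add: algebra_simps)
qed

lemma sin_cos_add_2pi_nat: "sin (x + 2 * pi * real k) = sin x" "cos (x + 2 * pi * real k) = cos x"
  using sin_cos_eq_iff[of "x + 2 * pi * real k" x] by (metis of_int_of_nat_eq)+

lemma sin_pos_in_period_imp:
  assumes "0 \<le> x" "x < 2 * pi" "sin x > 0"
  shows "0 < x \<and> x < pi"
proof -
  have "x \<noteq> 0" "\<not> pi \<le> x"
    using assms sin_le_zero[of x] by auto
  thus ?thesis using assms by linarith
qed

lemma angle_between_of_sin_signs:
  assumes "sin (\<phi> - \<alpha>) > 0" "sin (\<phi> - \<beta>) < 0" "\<alpha> \<le> \<beta>" "\<beta> \<le> \<alpha> + 2 * pi"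
  obtains \<mu> where "\<alpha> < \<mu>" "\<mu> < \<beta>" "cos \<mu> = cos \<phi>" "sin \<mu> = sin \<phi>"
proof -
  obtain k :: int where k: "0 \<le> \<phi> - \<alpha> + 2 * pi * of_int k" "\<phi> - \<alpha> + 2 * pi * of_int k < 2 * pi"
    using angle_in_period_offset by blast
  define \<mu> where "\<mu> = \<phi> + 2 * pi * of_int k"
  have "sin (\<mu> - y) = sin (\<phi> - y)" for y
  proof -
    have "sin (\<mu> - y) = sin ((\<phi> - y) + 2 * pi * of_int k)"
      unfolding \<mu>_def by (simp add: algebra_simps)
    also have "\<dots> = sin (\<phi> - y)"
      by (simp add: sin_add)
    finally show ?thesis .
  qed
  with assms k have "0 < \<mu> - \<alpha>" "\<mu> - \<alpha> < pi" "sin (\<mu> - \<beta>) < 0"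
    using sin_pos_in_period_imp[of "\<mu> - \<alpha>"] unfolding \<mu>_def by auto
  moreover from this have "\<mu> < \<beta>"
    using sin_ge_zero[of "\<mu> - \<beta>"] assms(3,4) by force
  moreover have "cos \<mu> = cos \<phi>" "sin \<mu> = sin \<phi>"
    unfolding \<mu>_def by (simp_all add: sin_add cos_add)
  ultimately show thesis using that by auto
qed

lemma polar_between_of_cross_signs:
  assumes "\<rho>1 > 0" "\<rho>2 > 0" "\<alpha> \<le> \<beta>" "\<beta> \<le> \<alpha> + 2 * pi"
    and "cross2 (\<rho>1 * cos \<alpha>, \<rho>1 * sin \<alpha>) W > 0"
    and "cross2 (\<rho>2 * cos \<beta>, \<rho>2 * sin \<beta>) W < 0"
  obtains \<mu> t where "\<alpha> < \<mu>" "\<mu> < \<beta>" "t > 0" "W = (t * cos \<mu>, t * sin \<mu>)"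
proof -
  define r where "r = sqrt ((fst W)\<^sup>2 + (snd W)\<^sup>2)"
  have "W \<noteq> (0, 0)"
    using assms(5) by (auto simp: cross2_def)
  then obtain \<phi> where r_pos: "r > 0" and W: "W = (r * cos \<phi>, r * sin \<phi>)"
    using polar_form unfolding r_def by metis
  have "0 < \<rho>1 * r * sin (\<phi> - \<alpha>)" "\<rho>2 * r * sin (\<phi> - \<beta>) < 0"
    using assms(5,6) by (simp_all add: W cross2_polar)
  hence "sin (\<phi> - \<alpha>) > 0" "sin (\<phi> - \<beta>) < 0"
    using assms(1,2) r_pos by (simp_all add: zero_less_mult_iff mult_less_0_iff)
  then obtain \<mu> where "\<alpha> < \<mu>" "\<mu> < \<beta>" "cos \<mu> = cos \<phi>" "sin \<mu> = sin \<phi>"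
    using angle_between_of_sin_signs assms(3,4) by blast
  with r_pos W show thesis
    using that[of \<mu> r] by simp
qed

lemma no_four_sin_sign_alternations:
  assumes "\<mu>1 < \<mu>2" "\<mu>2 < \<mu>3" "\<mu>3 < \<mu>4" "\<mu>4 < \<mu>1 + 2 * pi"
    and "sin (\<mu>1 - \<gamma>) > 0" "sin (\<mu>2 - \<gamma>) < 0" "sin (\<mu>3 - \<gamma>) > 0" "sin (\<mu>4 - \<gamma>) < 0"
  shows False
proof -
  obtain k :: int where k: "0 \<le> \<mu>1 - \<gamma> + 2 * pi * of_int k" "\<mu>1 - \<gamma> + 2 * pi * of_int k < 2 * pi"
    using angle_in_period_offset by blast
  define d where "d \<mu> = \<mu> - \<gamma> + 2 * pi * of_int k" for \<mu>
  have sin_d: "sin (d \<mu>) = sin (\<mu> - \<gamma>)" for \<mu>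
    unfolding d_def by (simp add: sin_add)
  have sin_d_2pi: "sin (d \<mu> - 2 * pi) = sin (\<mu> - \<gamma>)" for \<mu>
    using sin_d by (simp add: sin_diff)
  have d_less: "d \<mu>1 < d \<mu>2" "d \<mu>2 < d \<mu>3" "d \<mu>3 < d \<mu>4" "d \<mu>4 < d \<mu>1 + 2 * pi"
    using assms(1-4) unfolding d_def by auto
  have d1: "0 < d \<mu>1" "d \<mu>1 < pi"
    using sin_pos_in_period_imp[of "d \<mu>1"] k assms(5) sin_d unfolding d_def by auto
  have "pi < d \<mu>2"
    using sin_ge_zero[of "d \<mu>2"] d1 d_less assms(6) sin_d[of \<mu>2] by force
  moreover have "d \<mu>2 < 2 * pi"
    using sin_ge_zero[of "d \<mu>2 - 2 * pi"] d1 d_less assms(6) sin_d_2pi[of \<mu>2] by force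
  ultimately have "2 * pi \<le> d \<mu>3"
    using sin_le_zero[of "d \<mu>3"] d_less assms(7) sin_d[of \<mu>3] by force
  hence "sin (d \<mu>4 - 2 * pi) > 0"
    using sin_gt_zero[of "d \<mu>4 - 2 * pi"] d_less d1 by auto
  thus False
    using sin_d_2pi[of \<mu>4] assms(8) by simp
qed

section \<open>Turns of periodic sequences\<close>

definition four_turns :: "nat \<Rightarrow> (nat \<Rightarrow> 'a::linorder) \<Rightarrow> bool" where
  "four_turns n x \<longleftrightarrow> (\<exists>p q r s. p < q \<and> q < r \<and> r < s \<and> s < p + n \<and>
     x p < x (Suc p) \<and> x (Suc q) < x q \<and> x r < x (Suc r) \<and> x (Suc s) < x s)"

lemma periodic_mod:
  fixes n :: nat
  assumes "\<And>k. x (k + n) = x k"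
  shows "x (k mod n) = x k"
proof -
  have "x (j + m * n) = x j" for j m
    using assms by (induction m) (simp_all add: add.assoc [symmetric] add.commute [of n])
  from this[of "k mod n" "k div n"] show ?thesis
    by simp
qed

lemma range_eq_image_if_periodic:
  fixes n :: nat
  assumes "n > 0" "\<And>k. x (k + n) = x k"
  shows "range x = x ` {..<n}"
proof -
  have "x k \<in> x ` {..<n}" for k
    using periodic_mod[of x n k] assms by (metis imageI lessThan_iff mod_less_divisor)
  thus ?thesis by auto
qed

lemma rise_between:
  fixes x :: "nat \<Rightarrow> 'a::linorder"
  shows "a \<le> b \<Longrightarrow> x a < x b \<Longrightarrow> \<exists>k. a \<le> k \<and> k < b \<and> x k < x (Suc k)"
proof (induction b)
  case (Suc b)
  show ?case
  proof (cases "a \<le> b \<and> x a < x b")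
    case True
    thus ?thesis using Suc.IH by (metis less_SucI)
  next
    case False
    thus ?thesis using Suc.prems by (intro exI[of _ b]) (auto simp: le_Suc_eq)
  qed
qed simp

lemma fall_between:
  fixes x :: "nat \<Rightarrow> 'a::linorder"
  shows "a \<le> b \<Longrightarrow> x b < x a \<Longrightarrow> \<exists>k. a \<le> k \<and> k < b \<and> x (Suc k) < x k"
proof (induction b)
  case (Suc b)
  show ?case
  proof (cases "a \<le> b \<and> x b < x a")
    case True
    thus ?thesis using Suc.IH by (metis less_SucI)
  next
    case False
    thus ?thesis using Suc.prems by (intro exI[of _ b]) (auto simp: le_Suc_eq)
  qed
qed simp

lemma rising_before_max:
  fixes x :: "nat \<Rightarrow> 'a::linorder"
  assumes "\<not> four_turns n x" "x (m + n) = x m"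
    and min: "\<And>i. x m \<le> x i" and max: "\<And>i. x i \<le> x (m + L)"
    and "j < L" "L \<le> n"
  shows "x (m + j) \<le> x (Suc (m + j))"
proof (rule ccontr)
  assume "\<not> ?thesis"
  hence fall: "x (Suc (m + j)) < x (m + j)"
    by simp
  obtain p where "m \<le> p" "p < m + j" "x p < x (Suc p)"
    using rise_between[of m "m + j" x] fall min[of "Suc (m + j)"] by (meson le_add1 order.strict_trans1)
  moreover obtain r where "Suc (m + j) \<le> r" "r < m + L" "x r < x (Suc r)"
    using rise_between[of "Suc (m + j)" "m + L" x] fall max[of "m + j"] \<open>j < L\<close> by force
  moreover obtain s where "m + L \<le> s" "s < m + n" "x (Suc s) < x s"
    using fall_between[of "m + L" "m + n" x] fall min[of "Suc (m + j)"] max[of "m + j"] assms(2,6)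
    by force
  ultimately have "four_turns n x"
    unfolding four_turns_def using fall by (intro exI[of _ p] exI[of _ "m + j"] exI[of _ r] exI[of _ s]) auto
  with assms(1) show False ..
qed

lemma falling_after_max:
  fixes x :: "nat \<Rightarrow> 'a::linorder"
  assumes "\<not> four_turns n x" "x (m + n) = x m"
    and min: "\<And>i. x m \<le> x i" and max: "\<And>i. x i \<le> x (m + L)"
    and "L \<le> j" "j < n"
  shows "x (Suc (m + j)) \<le> x (m + j)"
proof (rule ccontr)
  assume "\<not> ?thesis"
  hence rise: "x (m + j) < x (Suc (m + j))"
    by simp
  obtain p where "m \<le> p" "p < m + L" "x p < x (Suc p)"
    using rise_between[of m "m + L" x] rise min[of "m + j"] max[of "Suc (m + j)"] by force
  moreover obtain q where "m + L \<le> q" "q < m + j" "x (Suc q) < x q"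
    using fall_between[of "m + L" "m + j" x] rise max[of "Suc (m + j)"] \<open>L \<le> j\<close> by force
  moreover obtain s where "Suc (m + j) \<le> s" "s < m + n" "x (Suc s) < x s"
    using fall_between[of "Suc (m + j)" "m + n" x] rise min[of "m + j"] assms(2,6) by force
  ultimately have "four_turns n x"
    unfolding four_turns_def using rise by (intro exI[of _ p] exI[of _ q] exI[of _ "m + j"] exI[of _ s]) auto
  with assms(1) show False ..
qed

lemma cyclic_unimodal_if_not_four_turns:
  fixes x :: "nat \<Rightarrow> 'a::linorder"
  assumes "n \<ge> 1" and periodic: "\<And>k. x (k + n) = x k" and "\<not> four_turns n x"
  shows "cyclic_unimodal n x"
proof -
  have x_mod: "x (k mod n) = x k" for k
    using periodic_mod periodic by blast
  have range_x: "range x = x ` {..<n}"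
    using range_eq_image_if_periodic[of n x] assms(1) periodic by simp
  have fin: "finite (range x)" "range x \<noteq> {}"
    unfolding range_x using \<open>n \<ge> 1\<close> by (auto simp: lessThan_empty_iff)
  obtain m where "m < n" "x m = Min (range x)"
    using Min_in[OF fin] unfolding range_x by auto
  hence min: "\<And>i. x m \<le> x i"
    using fin by simp
  obtain M where "M < n" "x M = Max (range x)"
    using Max_in[OF fin] unfolding range_x by auto
  hence max: "\<And>i. x i \<le> x M"
    using fin by simp
  define L where "L = (M + n - m) mod n"
  have "(m + L) mod n = M"
    unfolding L_def using \<open>m < n\<close> \<open>M < n\<close> by (simp add: mod_add_right_eq)
  hence max': "\<And>i. x i \<le> x (m + L)"
    using max x_mod by metis
  have "L \<le> n"
    unfolding L_def using \<open>n \<ge> 1\<close> by (simp add: order_less_imp_le)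
  show ?thesis
    unfolding cyclic_unimodal_def
  proof (intro exI conjI allI impI)
    show "m < n" "M < n" by fact+
    show "x ((m + j) mod n) \<le> x ((m + j + 1) mod n)" if "j < (M + n - m) mod n" for j
      using rising_before_max[OF assms(3) periodic min max' _ \<open>L \<le> n\<close>] that
      unfolding x_mod L_def by simp
    show "x ((m + j + 1) mod n) \<le> x ((m + j) mod n)" if "(M + n - m) mod n \<le> j \<and> j < n" for j
      using falling_after_max[OF assms(3) periodic min max'] that
      unfolding x_mod L_def by simp
  qed
qed

lemma cyclic_unimodal_order_cong:
  fixes F :: "nat \<Rightarrow> 'a::order" and G :: "nat \<Rightarrow> 'b::order"
  assumes "\<And>i j. i < n \<Longrightarrow> j < n \<Longrightarrow> F i \<le> F j \<longleftrightarrow> G i \<le> G j"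
    and "cyclic_unimodal n G"
  shows "cyclic_unimodal n F"
proof -
  obtain k l where "k < n" "l < n"
    "\<forall>j < (l + n - k) mod n. G ((k + j) mod n) \<le> G ((k + j + 1) mod n)"
    "\<forall>j. (l + n - k) mod n \<le> j \<and> j < n \<longrightarrow> G ((k + j + 1) mod n) \<le> G ((k + j) mod n)"
    using assms(2) unfolding cyclic_unimodal_def by blast
  moreover have "a mod n < n" for a
    using \<open>k < n\<close> by simp
  ultimately show ?thesis
    unfolding cyclic_unimodal_def using assms(1) by (intro exI[of _ k] exI[of _ l]) auto
qed

lemma four_turns_shift:
  fixes x :: "nat \<Rightarrow> 'a::linorder"
  assumes periodic: "\<And>k. x (k + n) = x k" and "r \<le> n" and "four_turns n x"
  shows "four_turns n (\<lambda>k. x (k + r))"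
proof -
  obtain p q r' s where "p < q" "q < r'" "r' < s" "s < p + n" "x p < x (Suc p)"
    "x (Suc q) < x q" "x r' < x (Suc r')" "x (Suc s) < x s"
    using assms(3) unfolding four_turns_def by blast
  moreover have "x (k + n - r + r) = x k" "x (Suc (k + n - r) + r) = x (Suc k)" for k
    using periodic[of k] periodic[of "Suc k"] \<open>r \<le> n\<close> by simp_all
  ultimately show ?thesis
    unfolding four_turns_def using \<open>r \<le> n\<close>
    by (intro exI[of _ "p + n - r"] exI[of _ "q + n - r"] exI[of _ "r' + n - r"] exI[of _ "s + n - r"])
      auto
qed

lemma adjacent_sign_change:
  fixes D :: "nat \<Rightarrow> real"
  assumes "i < j" "D i > 0" "D j < 0"
  shows "\<exists>i' j'. i \<le> i' \<and> i' < j' \<and> j' \<le> j \<and> D i' > 0 \<and> D j' < 0 \<and>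
    (\<forall>k. i' < k \<and> k < j' \<longrightarrow> D k = 0)"
  using assms
proof (induction "j - i" arbitrary: i rule: less_induct)
  case less
  define k where "k = (LEAST k. i < k \<and> D k \<noteq> 0)"
  have j: "i < j \<and> D j \<noteq> 0"
    using less.prems by auto
  have k: "i < k \<and> D k \<noteq> 0"
    unfolding k_def using j by (rule LeastI)
  have "k \<le> j"
    unfolding k_def using j by (rule Least_le)
  have zeros: "\<forall>l. i < l \<and> l < k \<longrightarrow> D l = 0"
    unfolding k_def using not_less_Least by blast
  show ?case
  proof (cases "D k < 0")
    case True
    with less.prems k \<open>k \<le> j\<close> zeros show ?thesis
      by blast
  next
    case False
    with k \<open>k \<le> j\<close> less.prems have "k < j" "D k > 0"
      by (auto simp: le_less)
    moreover have "j - k < j - i"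
      using k \<open>k \<le> j\<close> by linarith
    ultimately obtain i' j' where "k \<le> i' \<and> i' < j' \<and> j' \<le> j \<and> D i' > 0 \<and> D j' < 0 \<and>
        (\<forall>l. i' < l \<and> l < j' \<longrightarrow> D l = 0)"
      using less.hyps less.prems(3) by blast
    thus ?thesis
      using k by (intro exI[of _ i'] exI[of _ j']) auto
  qed
qed

lemma steps_const_imp_eq:
  "(\<And>k. a \<le> k \<Longrightarrow> k < b \<Longrightarrow> x (Suc k) = x k) \<Longrightarrow> a \<le> b \<Longrightarrow> x b = x a"
  by (induction b) (auto simp: le_Suc_eq)

section \<open>Orbits of affine maps whose vectors sweep the circle once\<close>

locale angle_sweep =
  fixes n :: nat and v :: "nat \<Rightarrow> real \<times> real" and \<Theta> :: "nat \<Rightarrow> real"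
  assumes vec_periodic: "v (k + n) = v k"
    and polar: "v k \<noteq> (0, 0) \<Longrightarrow> \<exists>\<rho>>0. v k = (\<rho> * cos (\<Theta> k), \<rho> * sin (\<Theta> k))"
    and angle_mono: "i \<le> j \<Longrightarrow> v i \<noteq> (0, 0) \<Longrightarrow> v j \<noteq> (0, 0) \<Longrightarrow> \<Theta> i \<le> \<Theta> j"
    and angle_period: "\<Theta> (k + n) = \<Theta> k + 2 * pi"

text \<open>In the application, x k is the intercept of the (k + r)-th shifted composite for a fixed offset r,
  c = 1 - A for their common slope A, and g k is the factor moved to the end by the next shift.\<close>
locale sweeping_orbit = angle_sweep n "\<lambda>k. lin_vec (g k)" \<Theta> for n g \<Theta> +
  fixes c :: real and x :: "nat \<Rightarrow> real"
  assumes x_periodic: "x (k + n) = x k"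
    and x_Suc: "x (Suc k) = fst (g k) * x k + snd (g k) * c"
    and slope_pos: "fst (g k) > 0"
begin

lemma step_eq_cross: "x (Suc k) - x k = cross2 (lin_vec (g k)) (x k, c)"
  by (simp add: x_Suc cross2_def lin_vec_def algebra_simps)

lemma cross_Suc_eq_step: "cross2 (lin_vec (g k)) (x (Suc k), c) = fst (g k) * (x (Suc k) - x k)"
  by (simp add: x_Suc cross2_def lin_vec_def algebra_simps)

lemma lin_vec_nonzero_if_step: "x (Suc k) \<noteq> x k \<Longrightarrow> lin_vec (g k) \<noteq> (0, 0)"
  using step_eq_cross[of k] by (auto simp: cross2_def)

text \<open>Up to positive factors, both steps are cross products of the vectors of g i and g j with the
  same point (x (Suc i), c).\<close>
lemma stalled_point_between:
  assumes "i < j" "j \<le> i + n" "x j = x (Suc i)"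
    and "e * (x (Suc i) - x i) > 0" "e * (x (Suc j) - x j) < 0"
  obtains \<mu> t where "\<Theta> i < \<mu>" "\<mu> < \<Theta> j" "(x (Suc i), c) = (t * cos \<mu>, t * sin \<mu>)" "e * t > 0"
proof -
  have "e \<noteq> 0"
    using assms(4) by auto
  define W where "W = (e * x (Suc i), e * c)"
  have W_scaled: "cross2 u W = e * cross2 u (x (Suc i), c)" for u
    unfolding W_def cross2_def by (simp add: algebra_simps)
  have cross_i: "cross2 (lin_vec (g i)) W > 0"
    using assms(4) slope_pos[of i]
    unfolding W_scaled cross_Suc_eq_step by (metis mult.left_commute mult_pos_pos)
  have cross_j: "cross2 (lin_vec (g j)) W < 0"
    using assms(5) unfolding W_scaled assms(3)[symmetric] step_eq_cross[symmetric] .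
  have v_i: "lin_vec (g i) \<noteq> (0, 0)"
    using assms(4) lin_vec_nonzero_if_step[of i] by (cases "x (Suc i) = x i") auto
  have v_j: "lin_vec (g j) \<noteq> (0, 0)"
    using assms(5) lin_vec_nonzero_if_step[of j] by (cases "x (Suc j) = x j") auto
  have "\<Theta> i \<le> \<Theta> j"
    using angle_mono[OF _ v_i v_j] assms(1) by simp
  moreover have "\<Theta> j \<le> \<Theta> i + 2 * pi"
  proof -
    have "lin_vec (g (i + n)) \<noteq> (0, 0)"
      using v_i vec_periodic[of i] by simp
    hence "\<Theta> j \<le> \<Theta> (i + n)"
      using angle_mono[OF assms(2) v_j] by simp
    thus ?thesis
      using angle_period[of i] by simp
  qed
  moreover obtain \<rho>1 where "\<rho>1 > 0" and \<rho>1: "lin_vec (g i) = (\<rho>1 * cos (\<Theta> i), \<rho>1 * sin (\<Theta> i))"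
    using polar[OF v_i] by blast
  moreover obtain \<rho>2 where "\<rho>2 > 0" and \<rho>2: "lin_vec (g j) = (\<rho>2 * cos (\<Theta> j), \<rho>2 * sin (\<Theta> j))"
    using polar[OF v_j] by blast
  ultimately obtain \<mu> t where "\<Theta> i < \<mu>" "\<mu> < \<Theta> j" "t > 0" "W = (t * cos \<mu>, t * sin \<mu>)"
    using polar_between_of_cross_signs cross_i[unfolded \<rho>1] cross_j[unfolded \<rho>2] by metis
  thus thesis
    using that[of \<mu> "t / e"] \<open>e \<noteq> 0\<close> unfolding W_def by (auto simp: field_simps)
qed

lemma turn_point_between:
  assumes "i < j" "j \<le> i + n" "e * (x (Suc i) - x i) > 0" "e * (x (Suc j) - x j) < 0"
  obtains \<mu> t m where "\<Theta> i < \<mu>" "\<mu> < \<Theta> j" "(x m, c) = (t * cos \<mu>, t * sin \<mu>)" "e * t > 0"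
proof -
  define D where "D k = e * (x (Suc k) - x k)" for k
  obtain i' j' where ij': "i \<le> i'" "i' < j'" "j' \<le> j" "D i' > 0" "D j' < 0"
    and zeros: "\<forall>k. i' < k \<and> k < j' \<longrightarrow> D k = 0"
    using adjacent_sign_change[of i j D] assms unfolding D_def by blast
  have "e \<noteq> 0"
    using assms(3) by auto
  have "x j' = x (Suc i')"
  proof (rule steps_const_imp_eq[where a = "Suc i'" and b = j' and x = x])
    show "x (Suc k) = x k" if "Suc i' \<le> k" "k < j'" for k
      using zeros[rule_format, of k] that \<open>e \<noteq> 0\<close> unfolding D_def by simp
  qed (use ij'(2) in simp)
  moreover have "j' \<le> i' + n"
    using ij'(1,3) assms(2) by simp
  ultimately obtain \<mu> t where "\<Theta> i' < \<mu>" "\<mu> < \<Theta> j'" "(x (Suc i'), c) = (t * cos \<mu>, t * sin \<mu>)" "e * t > 0"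
    using stalled_point_between[OF ij'(2)] ij'(4,5) unfolding D_def by blast
  moreover have nonzero: "lin_vec (g k) \<noteq> (0, 0)" if "D k \<noteq> 0" for k
    using that lin_vec_nonzero_if_step[of k] unfolding D_def by auto
  have "D i \<noteq> 0" "D j \<noteq> 0"
    using assms(3,4) unfolding D_def by auto
  with ij' have "\<Theta> i \<le> \<Theta> i'" "\<Theta> j' \<le> \<Theta> j"
    using angle_mono[OF ij'(1) nonzero nonzero] angle_mono[OF ij'(3) nonzero nonzero] by simp_all
  ultimately show thesis
    using that by (meson order.strict_trans1 order.strict_trans2)
qed

lemma turn_angle_between:
  assumes half_plane: "\<And>m. cross2 (cos \<gamma>, sin \<gamma>) (x m, c) > 0"
    and "i < j" "j \<le> i + n" "e * (x (Suc i) - x i) > 0" "e * (x (Suc j) - x j) < 0"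
  obtains \<mu> where "\<Theta> i < \<mu>" "\<mu> < \<Theta> j" "e * sin (\<mu> - \<gamma>) > 0"
proof -
  obtain \<mu> t m where \<mu>: "\<Theta> i < \<mu>" "\<mu> < \<Theta> j" and w: "(x m, c) = (t * cos \<mu>, t * sin \<mu>)"
    and "e * t > 0"
    using turn_point_between assms(2-5) by blast
  have "t * sin (\<mu> - \<gamma>) > 0"
    using half_plane[of m] cross2_polar[of 1 \<gamma> t \<mu>] unfolding w by simp
  with \<open>e * t > 0\<close> have "e * sin (\<mu> - \<gamma>) > 0"
    by (auto simp: zero_less_mult_iff)
  with \<mu> show thesis using that by blast
qed

lemma not_four_turns_in_half_plane:
  assumes half_plane: "\<And>m. cross2 (cos \<gamma>, sin \<gamma>) (x m, c) > 0"
  shows "\<not> four_turns n x"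
proof
  assume "four_turns n x"
  then obtain p q r s where order: "p < q" "q < r" "r < s" "s < p + n"
    and turns: "x p < x (Suc p)" "x (Suc q) < x q" "x r < x (Suc r)" "x (Suc s) < x s"
    unfolding four_turns_def by blast
  have "x (p + n) = x p" "x (Suc (p + n)) = x (Suc p)"
    using x_periodic[of p] x_periodic[of "Suc p"] by simp_all
  note turn = turn_angle_between[OF half_plane]
  obtain \<mu>1 where "\<Theta> p < \<mu>1" "\<mu>1 < \<Theta> q" "sin (\<mu>1 - \<gamma>) > 0"
    using turn[of p q 1] order turns by auto
  moreover obtain \<mu>2 where "\<Theta> q < \<mu>2" "\<mu>2 < \<Theta> r" "sin (\<mu>2 - \<gamma>) < 0"
    using turn[of q r "-1"] order turns by auto
  moreover obtain \<mu>3 where "\<Theta> r < \<mu>3" "\<mu>3 < \<Theta> s" "sin (\<mu>3 - \<gamma>) > 0"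
    using turn[of r s 1] order turns by auto
  moreover obtain \<mu>4 where "\<Theta> s < \<mu>4" "\<mu>4 < \<Theta> (p + n)" "sin (\<mu>4 - \<gamma>) < 0"
    using turn[of s "p + n" "-1"] order turns \<open>x (p + n) = x p\<close> \<open>x (Suc (p + n)) = x (Suc p)\<close>
    by auto
  moreover have "\<Theta> (p + n) = \<Theta> p + 2 * pi"
    by (rule angle_period)
  ultimately show False
    using no_four_sin_sign_alternations[of \<mu>1 \<mu>2 \<mu>3 \<mu>4 \<gamma>] by auto
qed

lemma orbit_in_half_plane_or_zero:
  "(\<exists>\<gamma>. \<forall>m. cross2 (cos \<gamma>, sin \<gamma>) (x m, c) > 0) \<or> (\<forall>m. x m = 0)"
proof (cases "c = 0")
  case False
  have "\<forall>m. cross2 (cos 0, sin 0) (x m, c) > 0" if "c > 0"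
    using that by (simp add: cross2_def)
  moreover have "\<forall>m. cross2 (cos pi, sin pi) (x m, c) > 0" if "c < 0"
    using that by (simp add: cross2_def)
  ultimately show ?thesis
    using False by (meson linorder_neqE_linordered_idom)
next
  case True
  hence x_Suc': "x (Suc k) = fst (g k) * x k" for k
    using x_Suc by simp
  consider "x 0 > 0" | "x 0 < 0" | "x 0 = 0"
    by linarith
  thus ?thesis
  proof cases
    case 1
    hence "x m > 0" for m
      by (induction m) (simp_all add: x_Suc' slope_pos)
    hence "\<forall>m. cross2 (cos (- (pi / 2)), sin (- (pi / 2))) (x m, c) > 0"
      by (simp add: cross2_def)
    thus ?thesis by blast
  next
    case 2
    hence "x m < 0" for m
      by (induction m) (simp_all add: x_Suc' slope_pos mult_pos_neg)
    hence "\<forall>m. cross2 (cos (pi / 2), sin (pi / 2)) (x m, c) > 0"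
      by (simp add: cross2_def)
    thus ?thesis by blast
  next
    case 3
    hence "x m = 0" for m
      by (induction m) (simp_all add: x_Suc')
    thus ?thesis by blast
  qed
qed

theorem not_four_turns: "\<not> four_turns n x"
proof (cases "\<forall>m. x m = 0")
  case True
  thus ?thesis unfolding four_turns_def by simp
next
  case False
  then obtain \<gamma> where "\<And>m. cross2 (cos \<gamma>, sin \<gamma>) (x m, c) > 0"
    using orbit_in_half_plane_or_zero by blast
  thus ?thesis by (rule not_four_turns_in_half_plane)
qed

end

section \<open>Composites of the shifts\<close>

lemma comp_upto_cong:
  "(\<And>i. 1 \<le> i \<Longrightarrow> i \<le> m \<Longrightarrow> \<sigma> i = \<sigma>' i) \<Longrightarrow> comp_upto f \<sigma> m = comp_upto f \<sigma>' m"
  by (induction m) auto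

lemma comp_upto_Suc_first:
  "comp_upto f \<sigma> (Suc m) = comp_upto f (\<lambda>i. \<sigma> (Suc i)) m \<circ> lin_fun (f (\<sigma> 1))"
  by (induction m) (auto simp: fun_eq_iff)

lemma comp_upto_affine: "\<exists>\<alpha> \<beta>. comp_upto f \<sigma> m = (\<lambda>y. \<alpha> * y + \<beta>)"
proof (induction m)
  case 0
  show ?case by (intro exI[of _ 1] exI[of _ 0]) auto
next
  case (Suc m)
  then obtain \<alpha> \<beta> where "comp_upto f \<sigma> m = (\<lambda>y. \<alpha> * y + \<beta>)"
    by blast
  thus ?case
    by (intro exI[of _ "fst (f (\<sigma> (Suc m))) * \<alpha>"] exI[of _ "fst (f (\<sigma> (Suc m))) * \<beta> + snd (f (\<sigma> (Suc m)))"])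
      (auto simp: lin_fun_def algebra_simps)
qed

text \<open>Moving the first factor to the end conjugates the composite by that factor, which keeps the
  slope and changes only the intercept.\<close>
lemma composite_shift_Suc:
  assumes "k < n" and "composite f n (shift n \<tau> k) = (\<lambda>y. A * y + B)"
  shows "composite f n (shift n \<tau> (Suc k)) =
    (\<lambda>y. A * y + (fst (f (\<tau> (Suc k))) * B + snd (f (\<tau> (Suc k))) * (1 - A)))"
proof -
  obtain m where n: "n = Suc m"
    using assms(1) by (cases n) auto
  define \<sigma> \<sigma>' where "\<sigma> = shift n \<tau> k" and "\<sigma>' = shift n \<tau> (Suc k)"
  define a b where "a = fst (f (\<tau> (Suc k)))" and "b = snd (f (\<tau> (Suc k)))"
  obtain \<alpha> \<beta> where rest: "comp_upto f (\<lambda>i. \<sigma> (Suc i)) m = (\<lambda>y. \<alpha> * y + \<beta>)"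
    using comp_upto_affine by blast
  have first: "\<sigma> 1 = \<tau> (Suc k)" and last: "\<sigma>' (Suc m) = \<tau> (Suc k)"
    using assms(1) n by (auto simp: \<sigma>_def \<sigma>'_def shift_def)
  have "comp_upto f \<sigma>' m = comp_upto f (\<lambda>i. \<sigma> (Suc i)) m"
    using assms(1) n by (intro comp_upto_cong) (auto simp: \<sigma>_def \<sigma>'_def shift_def)
  hence new: "composite f n \<sigma>' = (\<lambda>y. a * (\<alpha> * y + \<beta>) + b)"
    unfolding composite_def n comp_upto.simps last rest a_def b_def by (auto simp: lin_fun_def)
  have "composite f n \<sigma> = (\<lambda>y. \<alpha> * (a * y + b) + \<beta>)"
    unfolding composite_def n comp_upto_Suc_first first rest a_def b_def by (auto simp: lin_fun_def)
  with assms(2) have "A * 0 + B = \<alpha> * (a * 0 + b) + \<beta>" "A * 1 + B = \<alpha> * (a * 1 + b) + \<beta>"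
    unfolding \<sigma>_def by metis+
  hence "A = \<alpha> * a" "B = \<alpha> * b + \<beta>"
    by (simp_all add: algebra_simps)
  thus ?thesis
    unfolding \<sigma>'_def[symmetric] new a_def[symmetric] b_def[symmetric] by (auto simp: algebra_simps)
qed

lemma composite_shift_orbit:
  assumes "n \<ge> 1"
  obtains A X where "\<And>k. k < n \<Longrightarrow> composite f n (shift n \<tau> k) = (\<lambda>y. A * y + X k)"
    and "\<And>k. X (k + n) = X k"
    and "\<And>k. X (Suc k) = fst (f (\<tau> (Suc (k mod n)))) * X k + snd (f (\<tau> (Suc (k mod n)))) * (1 - A)"
proof -
  obtain A B where "composite f n (shift n \<tau> 0) = (\<lambda>y. A * y + B)"
    unfolding composite_def using comp_upto_affine by blast
  have affine: "composite f n (shift n \<tau> k) = (\<lambda>y. A * y + composite f n (shift n \<tau> k) 0)"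
    if "k < n" for k
    using that
  proof (induction k)
    case 0
    show ?case using \<open>composite f n (shift n \<tau> 0) = _\<close> by simp
  next
    case (Suc k)
    from composite_shift_Suc[OF _ Suc.IH] Suc.prems show ?case
      by simp
  qed
  define X where "X k = composite f n (shift n \<tau> (k mod n)) 0" for k
  have shift_n: "composite f n (shift n \<tau> n) = composite f n (shift n \<tau> 0)"
    unfolding composite_def by (rule comp_upto_cong) (auto simp: shift_def)
  have "X (Suc k) = fst (f (\<tau> (Suc (k mod n)))) * X k + snd (f (\<tau> (Suc (k mod n)))) * (1 - A)" for k
  proof -
    have "k mod n < n"
      using assms by simp
    from fun_cong[OF composite_shift_Suc[OF this affine[OF this]], of 0]
    have "composite f n (shift n \<tau> (Suc (k mod n))) 0 =
        fst (f (\<tau> (Suc (k mod n)))) * X k + snd (f (\<tau> (Suc (k mod n)))) * (1 - A)"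
      unfolding X_def by simp
    moreover have "composite f n (shift n \<tau> (Suc (k mod n))) 0 = X (Suc k)"
      using \<open>k mod n < n\<close> shift_n unfolding X_def
      by (cases "Suc (k mod n) = n") (auto simp: mod_Suc)
    ultimately show ?thesis by simp
  qed
  moreover have "X (k + n) = X k" for k
    unfolding X_def by simp
  moreover have "composite f n (shift n \<tau> k) = (\<lambda>y. A * y + X k)" if "k < n" for k
    using affine[OF that] that unfolding X_def by simp
  ultimately show thesis using that by blast
qed

section \<open>Counterclockwise orders\<close>

lemma identical_lin_iff: "identical_lin p \<longleftrightarrow> lin_vec p = (0, 0)"
proof
  assume "identical_lin p"
  hence "lin_fun p 0 = 0" "lin_fun p 1 = 1"
    unfolding identical_lin_def by auto
  thus "lin_vec p = (0, 0)"
    unfolding lin_fun_def lin_vec_def by auto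
qed (auto simp: identical_lin_def lin_fun_def lin_vec_def fun_eq_iff)

lemma filter_eq_append_conv:
  "filter P xs = ys @ zs \<Longrightarrow> \<exists>us vs. xs = us @ vs \<and> filter P us = ys \<and> filter P vs = zs"
proof (induction xs arbitrary: ys)
  case (Cons x xs)
  show ?case
  proof (cases "P x \<and> ys \<noteq> []")
    case True
    with Cons.prems obtain ys' where "ys = x # ys'" "filter P xs = ys' @ zs"
      by (cases ys) auto
    with Cons.IH[of ys'] True show ?thesis
      by (metis append_Cons filter.simps(2))
  next
    case False
    show ?thesis
    proof (cases "ys = []")
      case True
      with Cons.prems show ?thesis by (intro exI[of _ "[]"] exI[of _ "x # xs"]) auto
    next
      case False
      with \<open>\<not> (P x \<and> ys \<noteq> [])\<close> Cons.prems Cons.IH[of ys] show ?thesis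
        by (metis append_Cons filter.simps(2))
    qed
  qed
qed simp

lemma rotate_filter_eq_filter_rotate:
  "\<exists>r \<le> length xs. rotate k (filter P xs) = filter P (rotate r xs)"
proof -
  define ys where "ys = filter P xs"
  define j where "j = k mod length ys"
  have "filter P xs = take j ys @ drop j ys"
    unfolding ys_def by simp
  then obtain us vs where "xs = us @ vs" "filter P us = take j ys" "filter P vs = drop j ys"
    using filter_eq_append_conv by blast
  moreover from this have "rotate (length us) xs = vs @ us"
    by (simp add: rotate_append)
  ultimately show ?thesis
    unfolding ys_def[symmetric] by (intro exI[of _ "length us"]) (simp add: rotate_drop_take j_def)
qed

lemma rotate_upt_eq_map_mod: "rotate r [1..<n + 1] = map (\<lambda>a. (a + r) mod n + 1) [0..<n]"
  by (rule nth_equalityI) (auto simp: nth_rotate add.commute simp del: upt_Suc)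

lemma sorted_map_filter_upt_le:
  assumes "sorted (map f (filter P [0..<n]))" "a < b" "b < n" "P a" "P b"
  shows "f a \<le> f b"
proof -
  have "[0..<n] = [0..<b] @ [b..<n]"
    using assms(3) upt_add_eq_append[of 0 b "n - b"] by simp
  with assms(1) have "sorted (map f (filter P [0..<b] @ filter P [b..<n]))"
    by simp
  hence "sorted_wrt (\<lambda>x y. f x \<le> f y) (filter P [0..<b] @ filter P [b..<n])"
    by (simp only: sorted_map)
  thus ?thesis
    using assms(2-5) by (auto simp: sorted_wrt_append)
qed

lemma lifted_angle_mono:
  fixes \<theta> :: "nat \<Rightarrow> real"
  assumes range: "\<And>a. S a \<Longrightarrow> 0 \<le> \<theta> a \<and> \<theta> a < 2 * pi"
    and sorted: "\<And>a b. a < b \<Longrightarrow> b < n \<Longrightarrow> S a \<Longrightarrow> S b \<Longrightarrow> \<theta> a \<le> \<theta> b"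
    and "n > 0" "i \<le> j" "S (i mod n)" "S (j mod n)"
  shows "\<theta> (i mod n) + 2 * pi * real (i div n) \<le> \<theta> (j mod n) + 2 * pi * real (j div n)"
proof (cases "i div n < j div n")
  case True
  hence "2 * pi * (real (i div n) + 1) \<le> 2 * pi * real (j div n)"
    by simp
  moreover have "\<theta> (i mod n) < 2 * pi" "0 \<le> \<theta> (j mod n)"
    using range assms(5,6) by blast+
  ultimately show ?thesis
    by (simp add: algebra_simps)
next
  case False
  with \<open>i \<le> j\<close> have "i div n = j div n"
    by (simp add: div_le_mono le_antisym)
  moreover from this \<open>i \<le> j\<close> have "i mod n \<le> j mod n"
    by (metis add_le_cancel_left div_mult_mod_eq)
  ultimately show ?thesis
    using sorted[of "i mod n" "j mod n"] assms(3,5,6) by (cases "i mod n = j mod n") auto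
qed

lemma counterclockwise_sweep:
  fixes f :: "nat \<Rightarrow> real \<times> real" and \<tau> :: "nat \<Rightarrow> nat" and n :: nat
  defines "v \<equiv> \<lambda>r k. lin_vec (f (\<tau> (Suc ((k + r) mod n))))"
  assumes "counterclockwise f n \<tau>" "n > 0"
  obtains r \<Theta> where "r \<le> n" "angle_sweep n (v r) \<Theta>"
proof -
  define h where "h i = the (theta (f (\<tau> i)))" for i
  define Q where "Q i \<longleftrightarrow> lin_vec (f (\<tau> i)) \<noteq> (0, 0)" for i
  have "[h i. i \<leftarrow> xs, Q i] = map h (filter Q xs)" for xs
    by (induction xs) auto
  then obtain k where "sorted (rotate k (map h (filter Q [1..<n + 1])))"
    using assms(2) unfolding counterclockwise_def Let_def h_def Q_def identical_lin_iff by auto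
  then obtain r where "r \<le> n" and "sorted (map h (filter Q (rotate r [1..<n + 1])))"
    using rotate_filter_eq_filter_rotate[where k = k and P = Q and xs = "[1..<n + 1]"]
    by (auto simp: rotate_map simp del: upt_Suc)
  define \<phi> where "\<phi> a = (a + r) mod n + 1" for a
  have "sorted (map (h \<circ> \<phi>) (filter (Q \<circ> \<phi>) [0..<n]))"
    using \<open>sorted (map h _)\<close> unfolding rotate_upt_eq_map_mod \<phi>_def by (simp add: filter_map)
  hence sorted: "h (\<phi> a) \<le> h (\<phi> b)" if "a < b" "b < n" "Q (\<phi> a)" "Q (\<phi> b)" for a b
    using sorted_map_filter_upt_le[of "h \<circ> \<phi>" "Q \<circ> \<phi>"] that by simp
  have polar: "0 \<le> h i \<and> h i < 2 * pi \<and> (\<exists>\<rho>>0. lin_vec (f (\<tau> i)) = (\<rho> * cos (h i), \<rho> * sin (h i)))"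
    if "Q i" for i
    using polar_angle_SomeE[of "lin_vec (f (\<tau> i))"] that unfolding Q_def h_def theta_def
    by (metis option.sel)
  have v: "v r k = lin_vec (f (\<tau> (\<phi> (k mod n))))" for k
    unfolding v_def \<phi>_def by (simp add: mod_add_left_eq)
  define \<Theta> where "\<Theta> k = h (\<phi> (k mod n)) + 2 * pi * real (k div n)" for k
  have "angle_sweep n (v r) \<Theta>"
  proof
    show "v r (k + n) = v r k" for k
      unfolding v by simp
    show "\<exists>\<rho>>0. v r k = (\<rho> * cos (\<Theta> k), \<rho> * sin (\<Theta> k))" if "v r k \<noteq> (0, 0)" for k
      using polar[of "\<phi> (k mod n)"] that unfolding v Q_def \<Theta>_def by (auto simp: sin_cos_add_2pi_nat)
    show "\<Theta> i \<le> \<Theta> j" if "i \<le> j" "v r i \<noteq> (0, 0)" "v r j \<noteq> (0, 0)" for i j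
      using lifted_angle_mono[of "Q \<circ> \<phi>" "h \<circ> \<phi>"] sorted polar \<open>n > 0\<close> that
      unfolding v Q_def \<Theta>_def by simp
    show "\<Theta> (k + n) = \<Theta> k + 2 * pi" for k
      unfolding \<Theta>_def using \<open>n > 0\<close> by (simp add: algebra_simps)
  qed
  with \<open>r \<le> n\<close> show thesis ..
qed

theorem mainTheorem11:
  fixes f :: "nat \<Rightarrow> real \<times> real" and \<tau> :: "nat \<Rightarrow> nat" and n :: nat
  assumes "n \<ge> 1"
    and "\<forall>i\<in>{1..n}. monotone_lin (f i)"
    and "bij_betw \<tau> {1..n} {1..n}"
    and "counterclockwise f n \<tau>"
  shows "cyclic_unimodal n (\<lambda>k. composite f n (shift n \<tau> k))"
proof -
  have "n > 0"
    using assms(1) by simp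
  obtain A X where composites: "\<And>k. k < n \<Longrightarrow> composite f n (shift n \<tau> k) = (\<lambda>y. A * y + X k)"
    and X_periodic: "\<And>k. X (k + n) = X k"
    and X_Suc: "\<And>k. X (Suc k) = fst (f (\<tau> (Suc (k mod n)))) * X k + snd (f (\<tau> (Suc (k mod n)))) * (1 - A)"
    using composite_shift_orbit[OF assms(1)] by blast
  define g where "g r k = f (\<tau> (Suc ((k + r) mod n)))" for r k
  obtain r \<Theta> where "r \<le> n" and sweep: "angle_sweep n (\<lambda>k. lin_vec (g r k)) \<Theta>"
    using counterclockwise_sweep[OF assms(4) \<open>n > 0\<close>] unfolding g_def by blast
  have "sweeping_orbit n (g r) \<Theta> (1 - A) (\<lambda>k. X (k + r))"
  proof (intro sweeping_orbit.intro sweeping_orbit_axioms.intro)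
    show "X (k + n + r) = X (k + r)" for k
      using X_periodic[of "k + r"] by (simp add: ac_simps)
    show "X (Suc k + r) = fst (g r k) * X (k + r) + snd (g r k) * (1 - A)" for k
      using X_Suc[of "k + r"] unfolding g_def by simp
    have "Suc ((k + r) mod n) \<in> {1..n}" for k
      using \<open>n > 0\<close> by (simp add: Suc_leI)
    thus "fst (g r k) > 0" for k
      using assms(2) bij_betw_apply[OF assms(3)] unfolding g_def monotone_lin_def by blast
  qed (fact sweep)
  hence "\<not> four_turns n (\<lambda>k. X (k + r))"
    by (rule sweeping_orbit.not_four_turns)
  hence "\<not> four_turns n X"
    using four_turns_shift[where x = X, OF X_periodic \<open>r \<le> n\<close>] by blast
  hence "cyclic_unimodal n X"
    by (rule cyclic_unimodal_if_not_four_turns[where x = X, OF assms(1) X_periodic])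
  thus ?thesis
    by (rule cyclic_unimodal_order_cong[rotated]) (simp add: composites le_fun_def)
qed

end
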